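(* Let $E$ be a basic set of size $n\ge2$ in a signed group containing at least one pair of anticommuting elements. Then for some $k\in\{1,\dots,n\}$ there exist a replacement $E'$ of $E$ and a partition into disjoint sets $E'=F_0\cup F_1\cup\cdots\cup F_k$ such that each $F_j$, $j\ge1$, is anticommutative of size at least $2$, $F_0$ is commutative, and $F_j\circ F_{j'}=1$ for all $j\neq j'$, $0\le j,j'\le k$.
   Context: A signed group is a group containing a central element $-1\neq1$ with $(-1)^2=1$ such that any two elements either commute or anticommute ($ef=-fe$), and each element $e$ has $e^2\in\{\pm1\}$. For sets, $A\circ B=1$ means every element of $A$ commutes with every element of $B$. For a sequence $\mathbf e$ and finitary $0$-$1$ sequence $\mathbf p$, $\mathbf e^{\mathbf p}=e_1^{p_1}e_2^{p_2}\cdots$. A set is basic if no product $\mathbf e^{\mathbf p}$ of its elements with $\mathbf p\neq\mathbf 0$ equals $\pm1$; it generates $\{\pm\mathbf e^{\mathbf p}\}$; a replacement is another basic set generating the same group. A set is anticommutative (commutative) if its distinct elements pairwise anticommute (commute); singletons and $\emptyset$ count as both. *)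

theory Defs
  imports "HOL-Algebra.Group"
begin

text \<open>A signed group: a group G with a distinguished central element m (playing the role of -1),
  m \<noteq> 1, m^2 = 1, any two elements commute or anticommute, every square is 1 or m.\<close>
definition signed_group :: "('a, 'b) monoid_scheme \<Rightarrow> 'a \<Rightarrow> bool" where
  "signed_group G m \<longleftrightarrow> group G \<and> m \<in> carrier G \<and> m \<noteq> \<one>\<^bsub>G\<^esub> \<and> m \<otimes>\<^bsub>G\<^esub> m = \<one>\<^bsub>G\<^esub>
    \<and> (\<forall>x\<in>carrier G. m \<otimes>\<^bsub>G\<^esub> x = x \<otimes>\<^bsub>G\<^esub> m)
    \<and> (\<forall>e\<in>carrier G. \<forall>f\<in>carrier G.
          e \<otimes>\<^bsub>G\<^esub> f = f \<otimes>\<^bsub>G\<^esub> e \<or> e \<otimes>\<^bsub>G\<^esub> f = m \<otimes>\<^bsub>G\<^esub> (f \<otimes>\<^bsub>G\<^esub> e))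
    \<and> (\<forall>e\<in>carrier G. e \<otimes>\<^bsub>G\<^esub> e = \<one>\<^bsub>G\<^esub> \<or> e \<otimes>\<^bsub>G\<^esub> e = m)"

definition anticommute :: "('a, 'b) monoid_scheme \<Rightarrow> 'a \<Rightarrow> 'a \<Rightarrow> 'a \<Rightarrow> bool" where
  "anticommute G m e f \<longleftrightarrow> e \<otimes>\<^bsub>G\<^esub> f = m \<otimes>\<^bsub>G\<^esub> (f \<otimes>\<^bsub>G\<^esub> e)"

text \<open>Ordered product of a list of elements (the product e^p for the 0-1 sequence p selecting them).\<close>
definition lprod :: "('a, 'b) monoid_scheme \<Rightarrow> 'a list \<Rightarrow> 'a" where
  "lprod G xs = foldr (\<lambda>x y. x \<otimes>\<^bsub>G\<^esub> y) xs \<one>\<^bsub>G\<^esub>"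

definition basic :: "('a, 'b) monoid_scheme \<Rightarrow> 'a \<Rightarrow> 'a set \<Rightarrow> bool" where
  "basic G m E \<longleftrightarrow> E \<subseteq> carrier G \<and>
     (\<forall>xs. distinct xs \<and> xs \<noteq> [] \<and> set xs \<subseteq> E \<longrightarrow>
        lprod G xs \<noteq> \<one>\<^bsub>G\<^esub> \<and> lprod G xs \<noteq> m)"

text \<open>The group generated by E: all elements \<plusminus>e^p.\<close>
definition sgen :: "('a, 'b) monoid_scheme \<Rightarrow> 'a \<Rightarrow> 'a set \<Rightarrow> 'a set" where
  "sgen G m E = {x. \<exists>xs. distinct xs \<and> set xs \<subseteq> E \<and>
                      (x = lprod G xs \<or> x = m \<otimes>\<^bsub>G\<^esub> lprod G xs)}"

definition replacement :: "('a, 'b) monoid_scheme \<Rightarrow> 'a \<Rightarrow> 'a set \<Rightarrow> 'a set \<Rightarrow> bool" where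
  "replacement G m E E' \<longleftrightarrow> basic G m E' \<and> sgen G m E' = sgen G m E"

definition anticommutative :: "('a, 'b) monoid_scheme \<Rightarrow> 'a \<Rightarrow> 'a set \<Rightarrow> bool" where
  "anticommutative G m A \<longleftrightarrow> (\<forall>e\<in>A. \<forall>f\<in>A. e \<noteq> f \<longrightarrow> anticommute G m e f)"

definition commutative_set :: "('a, 'b) monoid_scheme \<Rightarrow> 'a set \<Rightarrow> bool" where
  "commutative_set G A \<longleftrightarrow> (\<forall>e\<in>A. \<forall>f\<in>A. e \<otimes>\<^bsub>G\<^esub> f = f \<otimes>\<^bsub>G\<^esub> e)"

text \<open>A \<circ> B = 1: every element of A commutes with every element of B.\<close>
definition sets_commute :: "('a, 'b) monoid_scheme \<Rightarrow> 'a set \<Rightarrow> 'a set \<Rightarrow> bool" where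
  "sets_commute G A B \<longleftrightarrow> (\<forall>e\<in>A. \<forall>f\<in>B. e \<otimes>\<^bsub>G\<^esub> f = f \<otimes>\<^bsub>G\<^esub> e)"

end

theory Submission
  imports Defs "HOL-Library.Multiset"
begin

text \<open>
  If \<open>E\<close> is not commutative, pick anticommuting \<open>a, b \<in> E\<close>. Replacing some other \<open>x \<in> E\<close> by
  \<open>x a\<close> or \<open>x b\<close> keeps the set basic and generating the same group, and it toggles the
  commutation of \<open>x\<close> with \<open>b\<close> resp. \<open>a\<close>; so at most two such steps make \<open>x\<close> commute with both.
  The remaining \<open>n - 2\<close> elements then form a basic set commuting with \<open>{a, b}\<close>, to which
  induction applies, and \<open>{a, b}\<close> becomes a new anticommutative block.
  Reordering a product and cancelling squares only changes it by a sign (\<open>sign_eq\<close>).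
\<close>

lemma odd_count_list_subset: "{x. odd (count_list ys x)} \<subseteq> set ys"
  by (auto, metis count_list_0_iff even_zero)

locale signed_grp = group G for G (structure) + fixes m assumes signed: "signed_group G m"
begin

lemma minus_closed [simp]: "m \<in> carrier G"
  and minus_neq_one: "m \<noteq> \<one>"
  and minus_square: "m \<otimes> m = \<one>"
  using signed by (auto simp: signed_group_def)

lemma minus_central: "x \<in> carrier G \<Longrightarrow> m \<otimes> x = x \<otimes> m"
  using signed by (simp add: signed_group_def)

lemma square_cases: "e \<in> carrier G \<Longrightarrow> e \<otimes> e = \<one> \<or> e \<otimes> e = m"
  using signed by (simp add: signed_group_def)

lemma minus_minus [simp]: "x \<in> carrier G \<Longrightarrow> m \<otimes> (m \<otimes> x) = x"
  by (metis m_assoc minus_closed minus_square l_one)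

lemma minus_left_commute: "f \<in> carrier G \<Longrightarrow> w \<in> carrier G \<Longrightarrow> f \<otimes> (m \<otimes> w) = m \<otimes> (f \<otimes> w)"
  by (metis m_assoc minus_closed minus_central)

definition commutes :: "'a \<Rightarrow> 'a \<Rightarrow> bool" where
  "commutes e f \<longleftrightarrow> e \<otimes> f = f \<otimes> e"

lemma commutes_sym: "commutes e f \<Longrightarrow> commutes f e"
  by (simp add: commutes_def)

lemma commutes_or_anticommute:
  "e \<in> carrier G \<Longrightarrow> f \<in> carrier G \<Longrightarrow> commutes e f \<or> anticommute G m e f"
  using signed unfolding signed_group_def commutes_def anticommute_def by blast

lemma anticommute_iff_not_commutes:
  assumes "e \<in> carrier G" "f \<in> carrier G"
  shows "anticommute G m e f \<longleftrightarrow> \<not> commutes e f"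
proof -
  have "f \<otimes> e \<noteq> m \<otimes> (f \<otimes> e)"
    using assms minus_neq_one by simp
  then show ?thesis
    using commutes_or_anticommute[OF assms] unfolding anticommute_def commutes_def by metis
qed

lemma anticommute_sym:
  "e \<in> carrier G \<Longrightarrow> f \<in> carrier G \<Longrightarrow> anticommute G m e f \<Longrightarrow> anticommute G m f e"
  by (metis anticommute_def minus_minus m_closed)

lemma commutes_mult_iff:
  assumes c: "e \<in> carrier G" "f \<in> carrier G" "g \<in> carrier G"
  shows "commutes (f \<otimes> g) e \<longleftrightarrow> (commutes f e \<longleftrightarrow> commutes g e)"
proof -
  define sf where "sf = (if commutes f e then \<one> else m)"
  define sg where "sg = (if commutes g e then \<one> else m)"
  have s: "sf \<in> carrier G" "sg \<in> carrier G" by (simp_all add: sf_def sg_def)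
  have fe: "f \<otimes> e = sf \<otimes> (e \<otimes> f)" and ge: "g \<otimes> e = sg \<otimes> (e \<otimes> g)"
    using anticommute_iff_not_commutes[of f e] anticommute_iff_not_commutes[of g e] c
    by (auto simp: sf_def sg_def commutes_def anticommute_def)
  have central: "x \<in> carrier G \<Longrightarrow> y \<in> carrier G \<Longrightarrow> x \<otimes> (sg \<otimes> y) = sg \<otimes> (x \<otimes> y)" for x y
    by (simp add: sg_def minus_left_commute)
  have "(f \<otimes> g) \<otimes> e = f \<otimes> (sg \<otimes> (e \<otimes> g))" using c ge by (simp add: m_assoc)
  also have "\<dots> = sg \<otimes> ((f \<otimes> e) \<otimes> g)" using c s central by (simp add: m_assoc)
  also have "\<dots> = (sg \<otimes> sf) \<otimes> (e \<otimes> (f \<otimes> g))" using c s fe by (simp add: m_assoc)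
  finally have "commutes (f \<otimes> g) e \<longleftrightarrow> sg \<otimes> sf = \<one>"
    using c s by (simp add: commutes_def)
  also have "\<dots> \<longleftrightarrow> (commutes f e \<longleftrightarrow> commutes g e)"
    using minus_square minus_neq_one by (simp add: sf_def sg_def)
  finally show ?thesis .
qed

definition sign_eq :: "'a \<Rightarrow> 'a \<Rightarrow> bool" where
  "sign_eq x y \<longleftrightarrow> x = y \<or> x = m \<otimes> y"

lemma sign_eq_refl [simp]: "sign_eq x x"
  by (simp add: sign_eq_def)

lemma sign_eq_trans: "y \<in> carrier G \<Longrightarrow> z \<in> carrier G \<Longrightarrow> sign_eq x y \<Longrightarrow> sign_eq y z \<Longrightarrow> sign_eq x z"
  by (auto simp: sign_eq_def)

lemma sign_eq_mult:
  assumes "x' \<in> carrier G" "y' \<in> carrier G" "sign_eq x x'" "sign_eq y y'"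
  shows "sign_eq (x \<otimes> y) (x' \<otimes> y')"
proof -
  have left: "(m \<otimes> x') \<otimes> y' = m \<otimes> (x' \<otimes> y')"
    using assms(1,2) by (simp add: m_assoc)
  have right: "x' \<otimes> (m \<otimes> y') = m \<otimes> (x' \<otimes> y')"
    using assms(1,2) by (rule minus_left_commute)
  have both: "(m \<otimes> x') \<otimes> (m \<otimes> y') = x' \<otimes> y'"
    using assms(1,2) right by (simp add: m_assoc)
  show ?thesis
    using assms(3,4) left right both unfolding sign_eq_def by auto
qed

lemma sign_eq_one_or_minus:
  "z \<in> carrier G \<Longrightarrow> sign_eq y z \<Longrightarrow> (y = \<one> \<or> y = m) \<longleftrightarrow> (z = \<one> \<or> z = m)"
proof -
  have "m \<otimes> z = \<one> \<longleftrightarrow> z = m" if "z \<in> carrier G" for z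
    using that minus_square by (metis minus_closed minus_minus r_one)
  then show "z \<in> carrier G \<Longrightarrow> sign_eq y z \<Longrightarrow> ?thesis"
    using minus_square minus_neq_one by (auto simp: sign_eq_def)
qed

lemma sign_eq_commute: "x \<in> carrier G \<Longrightarrow> y \<in> carrier G \<Longrightarrow> sign_eq (x \<otimes> y) (y \<otimes> x)"
  using commutes_or_anticommute[of x y] unfolding sign_eq_def commutes_def anticommute_def by blast

lemma lprod_Nil [simp]: "lprod G [] = \<one>"
  by (simp add: lprod_def)

lemma lprod_Cons [simp]: "lprod G (x # xs) = x \<otimes> lprod G xs"
  by (simp add: lprod_def)

lemma lprod_closed [simp]: "set xs \<subseteq> carrier G \<Longrightarrow> lprod G xs \<in> carrier G"
  by (induction xs) auto

lemma lprod_append: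
  "set xs \<subseteq> carrier G \<Longrightarrow> set ys \<subseteq> carrier G \<Longrightarrow> lprod G (xs @ ys) = lprod G xs \<otimes> lprod G ys"
  by (induction xs) (auto simp: m_assoc)

lemma lprod_mset_eq:
  "set ws \<subseteq> carrier G \<Longrightarrow> mset ws = mset ws' \<Longrightarrow> sign_eq (lprod G ws) (lprod G ws')"
proof (induction ws arbitrary: ws')
  case Nil
  then show ?case by simp
next
  case (Cons x ws)
  then have "x \<in> set ws'" by (metis list.set_intros(1) set_mset_mset)
  then obtain us vs where ws': "ws' = us @ x # vs" by (meson split_list)
  have mset_ws: "mset ws = mset (us @ vs)"
    using Cons.prems(2) ws' by simp
  have c: "x \<in> carrier G" "set us \<subseteq> carrier G" "set vs \<subseteq> carrier G"
    using Cons.prems(1) mset_eq_setD[OF mset_ws] by auto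
  have "sign_eq (lprod G ws) (lprod G us \<otimes> lprod G vs)"
    using Cons.IH[OF _ mset_ws] Cons.prems(1) c by (simp add: lprod_append)
  then have "sign_eq (x \<otimes> lprod G ws) (x \<otimes> lprod G us \<otimes> lprod G vs)"
    using c by (simp add: sign_eq_mult m_assoc)
  moreover have "sign_eq (x \<otimes> lprod G us \<otimes> lprod G vs) (lprod G us \<otimes> x \<otimes> lprod G vs)"
    using c by (intro sign_eq_mult sign_eq_commute) auto
  moreover have "lprod G us \<otimes> x \<otimes> lprod G vs = lprod G ws'"
    using c ws' by (simp add: lprod_append m_assoc)
  ultimately show ?case
    using c ws' sign_eq_trans[of "x \<otimes> lprod G us \<otimes> lprod G vs" "lprod G ws'"] by simp
qed

lemma sign_eq_square: "x \<in> carrier G \<Longrightarrow> w \<in> carrier G \<Longrightarrow> sign_eq (x \<otimes> x \<otimes> w) w"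
  using square_cases[of x] by (auto simp: sign_eq_def)

lemma lprod_normal_form:
  "set ys \<subseteq> carrier G \<Longrightarrow>
    \<exists>zs. distinct zs \<and> set zs = {x. odd (count_list ys x)} \<and> sign_eq (lprod G ys) (lprod G zs)"
proof (induction ys)
  case Nil
  then show ?case by simp
next
  case (Cons x ys)
  then obtain zs where zs: "distinct zs" "set zs = {x. odd (count_list ys x)}"
    "sign_eq (lprod G ys) (lprod G zs)" by auto
  have "set zs \<subseteq> set ys"
    unfolding zs(2) by (rule odd_count_list_subset)
  then have x: "x \<in> carrier G" and zs_carrier: "set zs \<subseteq> carrier G"
    using Cons.prems by auto
  have step: "sign_eq (lprod G (x # ys)) (lprod G (x # zs))"
    using x zs(3) zs_carrier by (simp add: sign_eq_mult)
  show ?case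
  proof (cases "x \<in> set zs")
    case False
    then show ?thesis using zs step by (intro exI[of _ "x # zs"]) auto
  next
    case True
    then obtain us vs where uv: "zs = us @ x # vs" by (meson split_list)
    have c: "set us \<subseteq> carrier G" "set vs \<subseteq> carrier G"
      using zs_carrier uv by auto
    have rest: "lprod G (us @ vs) \<in> carrier G"
      using c by simp
    have "sign_eq (lprod G (x # zs)) (lprod G (x # x # us @ vs))"
      by (rule lprod_mset_eq) (use uv x c in auto)
    moreover have "lprod G (x # x # us @ vs) = x \<otimes> x \<otimes> lprod G (us @ vs)"
      using x rest by (simp add: m_assoc)
    ultimately have "sign_eq (lprod G (x # zs)) (lprod G (us @ vs))"
      using sign_eq_trans sign_eq_square[OF x rest] x rest by (metis m_closed)
    then have "sign_eq (lprod G (x # ys)) (lprod G (us @ vs))"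
      using sign_eq_trans[OF _ rest step] x zs_carrier by simp
    moreover have "set (us @ vs) = {y. odd (count_list (x # ys) y)}"
    proof -
      have "set (us @ vs) = set zs - {x}"
        using zs(1) uv by auto
      then show ?thesis
        using zs(2) True by auto
    qed
    ultimately show ?thesis
      using zs(1) uv by (intro exI[of _ "us @ vs"]) auto
  qed
qed

lemma sgen_intro:
  assumes "E \<subseteq> carrier G" "set ys \<subseteq> E" "sign_eq w (lprod G ys)"
  shows "w \<in> sgen G m E"
proof -
  obtain zs where zs: "distinct zs" "set zs = {x. odd (count_list ys x)}"
    "sign_eq (lprod G ys) (lprod G zs)"
    using lprod_normal_form[of ys] assms(1,2) by (meson subset_trans)
  have "set zs \<subseteq> E"
    using odd_count_list_subset[of ys] assms(2) unfolding zs(2) by (rule subset_trans)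
  moreover have "sign_eq w (lprod G zs)"
    using sign_eq_trans[OF _ _ assms(3) zs(3)] assms \<open>set zs \<subseteq> E\<close> by auto
  ultimately show ?thesis
    using zs(1) unfolding sgen_def sign_eq_def by blast
qed

lemma sgen_elim: "w \<in> sgen G m E \<Longrightarrow> \<exists>xs. distinct xs \<and> set xs \<subseteq> E \<and> sign_eq w (lprod G xs)"
  unfolding sgen_def sign_eq_def by blast

lemma sgen_closed:
  assumes "E \<subseteq> carrier G"
  shows "sgen G m E \<subseteq> carrier G"
proof
  fix w assume "w \<in> sgen G m E"
  then obtain xs where "set xs \<subseteq> E" "sign_eq w (lprod G xs)"
    using sgen_elim by blast
  then show "w \<in> carrier G"
    using assms lprod_closed[of xs] by (auto simp: sign_eq_def)
qed

lemma subset_sgen: "E \<subseteq> carrier G \<Longrightarrow> E \<subseteq> sgen G m E"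
proof
  fix x assume "E \<subseteq> carrier G" "x \<in> E"
  then show "x \<in> sgen G m E"
    by (intro sgen_intro[of E "[x]"]) auto
qed

lemma sign_eq_in_sgen:
  assumes E: "E \<subseteq> carrier G" and y: "y \<in> sgen G m E" and w: "sign_eq w y"
  shows "w \<in> sgen G m E"
proof -
  obtain xs where xs: "set xs \<subseteq> E" "sign_eq y (lprod G xs)"
    using sgen_elim[OF y] by blast
  have "y \<in> carrier G" "lprod G xs \<in> carrier G"
    using sgen_closed[OF E] y xs(1) E by auto
  then show ?thesis
    using sgen_intro[OF E xs(1)] sign_eq_trans[OF _ _ w xs(2)] by blast
qed

lemma sgen_mult:
  assumes E: "E \<subseteq> carrier G" and x: "x \<in> sgen G m E" and y: "y \<in> sgen G m E"
  shows "x \<otimes> y \<in> sgen G m E"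
proof -
  obtain xs ys where xs: "set xs \<subseteq> E" "sign_eq x (lprod G xs)"
    and ys: "set ys \<subseteq> E" "sign_eq y (lprod G ys)"
    using sgen_elim[OF x] sgen_elim[OF y] by blast
  have "sign_eq (x \<otimes> y) (lprod G (xs @ ys))"
    using xs ys E by (simp add: lprod_append sign_eq_mult subset_trans)
  then show ?thesis
    using sgen_intro[OF E, of "xs @ ys"] xs ys by auto
qed

lemma lprod_in_sgen: "E \<subseteq> carrier G \<Longrightarrow> set xs \<subseteq> sgen G m E \<Longrightarrow> lprod G xs \<in> sgen G m E"
  by (induction xs) (auto simp: sgen_mult intro: sgen_intro[where ys = "[]"])

lemma sgen_subset:
  assumes E: "E \<subseteq> carrier G" and A: "A \<subseteq> sgen G m E"
  shows "sgen G m A \<subseteq> sgen G m E"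
proof
  fix w assume "w \<in> sgen G m A"
  then obtain xs where "set xs \<subseteq> A" "sign_eq w (lprod G xs)"
    using sgen_elim by blast
  then show "w \<in> sgen G m E"
    using A lprod_in_sgen[OF E] sign_eq_in_sgen[OF E] by blast
qed

lemma sgen_eqI:
  "A \<subseteq> carrier G \<Longrightarrow> B \<subseteq> carrier G \<Longrightarrow> A \<subseteq> sgen G m B \<Longrightarrow> B \<subseteq> sgen G m A \<Longrightarrow>
    sgen G m A = sgen G m B"
  by (simp add: sgen_subset subset_antisym)

lemma sgen_mono: "E \<subseteq> carrier G \<Longrightarrow> A \<subseteq> E \<Longrightarrow> sgen G m A \<subseteq> sgen G m E"
  by (meson sgen_subset subset_sgen subset_trans)

lemma lprod_commutes:
  "a \<in> carrier G \<Longrightarrow> set xs \<subseteq> carrier G \<Longrightarrow> \<forall>x\<in>set xs. commutes x a \<Longrightarrow> commutes (lprod G xs) a"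
proof (induction xs)
  case Nil
  then show ?case by (simp add: commutes_def)
next
  case (Cons x xs)
  then show ?case by (simp add: commutes_mult_iff)
qed

lemma sgen_commutes:
  assumes "E \<subseteq> carrier G" "a \<in> carrier G" "\<forall>x\<in>E. commutes x a" "w \<in> sgen G m E"
  shows "commutes w a"
proof -
  obtain xs where xs: "set xs \<subseteq> E" "sign_eq w (lprod G xs)"
    using sgen_elim[OF assms(4)] by blast
  have "commutes (lprod G xs) a" "commutes m a"
    using lprod_commutes[of a xs] assms xs minus_central by (auto simp: commutes_def)
  then show ?thesis
    using xs assms by (auto simp: sign_eq_def commutes_mult_iff subset_trans)
qed

lemma basic_carrier: "basic G m E \<Longrightarrow> E \<subseteq> carrier G"
  by (simp add: basic_def)

lemma basic_subset:
  assumes E: "basic G m E" and A: "A \<subseteq> E"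
  shows "basic G m A"
proof -
  have "A \<subseteq> carrier G"
    using A basic_carrier[OF E] by (rule subset_trans)
  moreover have "\<forall>xs. distinct xs \<and> xs \<noteq> [] \<and> set xs \<subseteq> A \<longrightarrow> lprod G xs \<noteq> \<one> \<and> lprod G xs \<noteq> m"
  proof (intro allI impI)
    fix xs assume "distinct xs \<and> xs \<noteq> [] \<and> set xs \<subseteq> A"
    then have "distinct xs \<and> xs \<noteq> [] \<and> set xs \<subseteq> E"
      using A by auto
    then show "lprod G xs \<noteq> \<one> \<and> lprod G xs \<noteq> m"
      using E unfolding basic_def by blast
  qed
  ultimately show ?thesis
    unfolding basic_def by blast
qed

lemma basic_odd_count:
  assumes E: "basic G m E" and ys: "set ys \<subseteq> E" and odd: "odd (count_list ys x)"
  shows "lprod G ys \<noteq> \<one> \<and> lprod G ys \<noteq> m"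
proof -
  obtain zs where zs: "distinct zs" "set zs = {x. odd (count_list ys x)}"
    "sign_eq (lprod G ys) (lprod G zs)"
    using lprod_normal_form[of ys] basic_carrier[OF E] ys by (meson subset_trans)
  have "set zs \<subseteq> E"
    using odd_count_list_subset[of ys] ys unfolding zs(2) by (rule subset_trans)
  moreover have "zs \<noteq> []"
    using zs(2) odd by auto
  ultimately have "lprod G zs \<noteq> \<one> \<and> lprod G zs \<noteq> m"
    using E zs(1) unfolding basic_def by blast
  then show ?thesis
    using sign_eq_one_or_minus[OF _ zs(3)] basic_carrier[OF E] \<open>set zs \<subseteq> E\<close> by auto
qed

lemma replacement_refl: "basic G m E \<Longrightarrow> replacement G m E E"
  by (simp add: replacement_def)

lemma replacement_trans: "replacement G m E E' \<Longrightarrow> replacement G m E' E'' \<Longrightarrow> replacement G m E E''"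
  by (simp add: replacement_def)

lemma basic_mult_notin:
  assumes E: "basic G m E" and xy: "x \<in> E" "y \<in> E" "x \<noteq> y"
  shows "x \<otimes> y \<notin> E"
proof
  assume xyE: "x \<otimes> y \<in> E"
  let ?ys = "[x, y, x \<otimes> y]"
  have "odd (count_list ?ys (if x \<otimes> y = x then y else x))"
    using xy by auto
  moreover have "set ?ys \<subseteq> E"
    using xy xyE by simp
  ultimately have "lprod G ?ys \<noteq> \<one> \<and> lprod G ?ys \<noteq> m"
    using basic_odd_count[OF E] by blast
  moreover have "lprod G ?ys = (x \<otimes> y) \<otimes> (x \<otimes> y)"
    using xy basic_carrier[OF E] by (simp add: m_assoc subsetD)
  ultimately show False
    using square_cases xy basic_carrier[OF E] by auto
qed

lemma basic_insert_mult:
  assumes E: "basic G m E" and xy: "x \<in> E" "y \<in> E" "x \<noteq> y"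
  shows "basic G m (insert (x \<otimes> y) (E - {x}))"
proof -
  let ?E' = "insert (x \<otimes> y) (E - {x})"
  have c: "E \<subseteq> carrier G" "x \<in> carrier G" "y \<in> carrier G" "?E' \<subseteq> carrier G"
    using basic_carrier[OF E] xy by auto
  have "lprod G ws \<noteq> \<one> \<and> lprod G ws \<noteq> m"
    if ws: "distinct ws" "ws \<noteq> []" "set ws \<subseteq> ?E'" for ws
  proof (cases "x \<otimes> y \<in> set ws")
    case False
    then have "set ws \<subseteq> E"
      using ws(3) by auto
    then show ?thesis
      using E ws(1,2) unfolding basic_def by blast
  next
    case True
    then obtain us vs where uv: "ws = us @ (x \<otimes> y) # vs" by (meson split_list)
    have uv_sub: "set us \<subseteq> E - {x}" "set vs \<subseteq> E - {x}"
      using ws uv basic_mult_notin[OF E xy] by auto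
    then have uv_carrier: "set us \<subseteq> carrier G" "set vs \<subseteq> carrier G"
      using c(1) by auto
    let ?ys = "us @ x # y # vs"
    have "lprod G ws = lprod G ?ys"
      using uv uv_carrier c(2,3) by (simp add: lprod_append m_assoc)
    moreover have "count_list ?ys x = 1"
      using uv_sub xy(3) by (auto simp: count_list_0_iff)
    moreover have "set ?ys \<subseteq> E"
      using uv_sub xy by auto
    ultimately show ?thesis
      using basic_odd_count[OF E, of ?ys x] by simp
  qed
  then show ?thesis
    using c(4) unfolding basic_def by blast
qed

lemma replacement_insert_mult:
  assumes E: "basic G m E" and xy: "x \<in> E" "y \<in> E" "x \<noteq> y"
  shows "replacement G m E (insert (x \<otimes> y) (E - {x}))"
proof -
  let ?E' = "insert (x \<otimes> y) (E - {x})"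
  have c: "E \<subseteq> carrier G" "x \<in> carrier G" "y \<in> carrier G" "?E' \<subseteq> carrier G"
    using basic_carrier[OF E] xy by auto
  have "sign_eq x ((x \<otimes> y) \<otimes> y)"
    using square_cases[OF c(3)]
  proof
    assume "y \<otimes> y = \<one>"
    then show ?thesis
      using c(2,3) by (simp add: m_assoc)
  next
    assume "y \<otimes> y = m"
    then have "(x \<otimes> y) \<otimes> y = m \<otimes> x"
      using c(2,3) by (simp add: m_assoc minus_central)
    then show ?thesis
      using c(2) by (simp add: sign_eq_def)
  qed
  moreover have "(x \<otimes> y) \<otimes> y \<in> sgen G m ?E'"
    using sgen_mult[OF c(4)] subset_sgen[OF c(4)] xy by auto
  ultimately have "x \<in> sgen G m ?E'"
    using sign_eq_in_sgen[OF c(4)] by blast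
  then have "E \<subseteq> sgen G m ?E'"
    using subset_sgen[OF c(4)] by blast
  moreover have "?E' \<subseteq> sgen G m E"
    using subset_sgen[OF c(1)] sgen_mult[OF c(1)] xy by blast
  ultimately have "sgen G m ?E' = sgen G m E"
    using c(1,4) by (intro sgen_eqI)
  then show ?thesis
    using basic_insert_mult[OF E xy] by (simp add: replacement_def)
qed

lemma replacement_commuting_step:
  assumes E: "basic G m E" and x: "x \<in> E" and c: "c \<in> E" "c \<noteq> x"
    and e: "e \<in> carrier G" and ce: "anticommute G m c e"
  shows "\<exists>x'. replacement G m E (insert x' (E - {x})) \<and> x' \<notin> E - {x} \<and> commutes x' e \<and>
    (\<forall>d\<in>carrier G. commutes c d \<longrightarrow> (commutes x' d \<longleftrightarrow> commutes x d))"
proof (cases "commutes x e")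
  case True
  have "insert x (E - {x}) = E"
    using x by auto
  then show ?thesis
    using True replacement_refl[OF E] by (intro exI[of _ x]) auto
next
  case False
  have cx: "x \<in> carrier G" "c \<in> carrier G"
    using x c basic_carrier[OF E] by auto
  have "\<not> commutes c e"
    using anticommute_iff_not_commutes[OF cx(2) e] ce by blast
  then have "commutes (x \<otimes> c) e"
    using False commutes_mult_iff[OF e cx] by simp
  moreover have "commutes (x \<otimes> c) d \<longleftrightarrow> commutes x d" if "d \<in> carrier G" "commutes c d" for d
    using commutes_mult_iff[OF that(1) cx] that(2) by simp
  moreover have "x \<otimes> c \<notin> E"
    using basic_mult_notin[OF E x c(1)] c(2) by blast
  ultimately show ?thesis
    using replacement_insert_mult[OF E x c(1)] c(2) by (intro exI[of _ "x \<otimes> c"]) auto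
qed

lemma replacement_commuting_pair:
  assumes E: "basic G m E" and x: "x \<in> E" and ab: "a \<in> E" "b \<in> E" "x \<noteq> a" "x \<noteq> b"
    and anti: "anticommute G m a b"
  shows "\<exists>x'. replacement G m E (insert x' (E - {x})) \<and> x' \<notin> E - {x} \<and> commutes x' a \<and> commutes x' b"
proof -
  have c: "a \<in> carrier G" "b \<in> carrier G"
    using ab basic_carrier[OF E] by auto
  obtain x1 where x1: "replacement G m E (insert x1 (E - {x}))" "x1 \<notin> E - {x}" "commutes x1 b"
    using replacement_commuting_step[OF E x ab(1) ab(3)[symmetric] c(2) anti] by blast
  let ?E1 = "insert x1 (E - {x})"
  have E1: "basic G m ?E1"
    using x1(1) by (simp add: replacement_def)
  have b: "b \<in> ?E1" "b \<noteq> x1"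
    using ab x1(2) by auto
  obtain x2 where x2: "replacement G m ?E1 (insert x2 (?E1 - {x1}))" "x2 \<notin> ?E1 - {x1}"
    "commutes x2 a" "commutes x2 b \<longleftrightarrow> commutes x1 b"
    using replacement_commuting_step[OF E1 _ b c(1) anticommute_sym[OF c anti]] c(2)
    by (auto simp: commutes_def)
  have "?E1 - {x1} = E - {x}"
    using x1(2) by auto
  then show ?thesis
    using x1 x2 replacement_trans by (intro exI[of _ x2]) auto
qed

lemma replacement_commuting_subset:
  assumes E: "basic G m E" and ab: "a \<in> E" "b \<in> E" and anti: "anticommute G m a b"
    and X: "finite X" "X \<subseteq> E - {a, b}"
  shows "\<exists>Y. replacement G m E ((E - X) \<union> Y) \<and> (E - X) \<inter> Y = {} \<and> finite Y \<and>
    card Y = card X \<and> (\<forall>y\<in>Y. commutes y a \<and> commutes y b)"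
  using X
proof (induction X rule: finite_induct)
  case empty
  then show ?case
    using replacement_refl[OF E] by (intro exI[of _ "{}"]) auto
next
  case (insert x X)
  then obtain Y where Y: "replacement G m E ((E - X) \<union> Y)" "(E - X) \<inter> Y = {}" "finite Y"
    "card Y = card X" "\<forall>y\<in>Y. commutes y a \<and> commutes y b"
    by auto
  let ?E' = "(E - X) \<union> Y"
  have E': "basic G m ?E'"
    using Y(1) by (simp add: replacement_def)
  have x: "x \<in> ?E'" "x \<noteq> a" "x \<noteq> b" "x \<notin> Y"
    using insert.hyps(2) insert.prems Y(2) by auto
  have "a \<in> ?E'" "b \<in> ?E'"
    using ab insert.prems by auto
  then obtain x' where x': "replacement G m ?E' (insert x' (?E' - {x}))" "x' \<notin> ?E' - {x}"
    "commutes x' a" "commutes x' b"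
    using replacement_commuting_pair[OF E' x(1) _ _ x(2,3) anti] by blast
  have "insert x' (?E' - {x}) = (E - insert x X) \<union> insert x' Y"
    using x(4) by auto
  moreover have "(E - insert x X) \<inter> insert x' Y = {}"
    using Y(2) x'(2) by auto
  moreover have "card (insert x' Y) = card (insert x X)"
  proof -
    have "x' \<notin> Y"
      using x'(2) x(4) by auto
    then show ?thesis
      using Y(3,4) insert.hyps by simp
  qed
  ultimately show ?case
    using replacement_trans[OF Y(1) x'(1)] Y(3,5) x'(3,4) by (intro exI[of _ "insert x' Y"]) auto
qed

lemma replacement_split_pair:
  assumes E: "basic G m E" "finite E" and ab: "a \<in> E" "b \<in> E" and anti: "anticommute G m a b"
  shows "\<exists>Y. replacement G m E ({a, b} \<union> Y) \<and> {a, b} \<inter> Y = {} \<and> finite Y \<and>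
    card Y + 2 = card E \<and> (\<forall>y\<in>Y. commutes y a \<and> commutes y b)"
proof -
  have "a \<noteq> b"
    using anti anticommute_iff_not_commutes ab basic_carrier[OF E(1)] by (auto simp: commutes_def)
  moreover have "card {a, b} \<le> card E"
    using ab E(2) by (intro card_mono) auto
  ultimately have "card (E - {a, b}) + 2 = card E"
    using ab E(2) by (simp add: card_Diff_subset)
  moreover have "E - (E - {a, b}) = {a, b}"
    using ab by auto
  ultimately show ?thesis
    using replacement_commuting_subset[OF E(1) ab anti, of "E - {a, b}"] E(2) by auto
qed

lemma lprod_partition:
  "set ws \<subseteq> carrier G \<Longrightarrow>
    sign_eq (lprod G ws) (lprod G (filter P ws) \<otimes> lprod G (filter (\<lambda>x. \<not> P x) ws))"
proof -
  assume ws: "set ws \<subseteq> carrier G"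
  then have "set (filter P ws) \<subseteq> carrier G" "set (filter (\<lambda>x. \<not> P x) ws) \<subseteq> carrier G"
    by auto
  then show ?thesis
    using lprod_mset_eq[OF ws, of "filter P ws @ filter (\<lambda>x. \<not> P x) ws"]
    by (simp add: lprod_append flip: multiset_partition)
qed

lemma basic_Un_replacement:
  assumes AB: "basic G m (A \<union> B)" and disj: "A \<inter> B = {}" and B': "replacement G m B B'"
  shows "basic G m (A \<union> B')"
proof -
  have bB': "basic G m B'" and sB': "sgen G m B' = sgen G m B"
    using B' by (auto simp: replacement_def)
  have c: "A \<subseteq> carrier G" "B \<subseteq> carrier G" "B' \<subseteq> carrier G"
    using basic_carrier[OF AB] basic_carrier[OF bB'] by auto
  have "lprod G ws \<noteq> \<one> \<and> lprod G ws \<noteq> m"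
    if ws: "distinct ws" "ws \<noteq> []" "set ws \<subseteq> A \<union> B'" for ws
  proof -
    let ?us = "filter (\<lambda>x. x \<in> A) ws" and ?vs = "filter (\<lambda>x. x \<notin> A) ws"
    have vs: "set ?vs \<subseteq> B'" "set ?us \<subseteq> A"
      using ws(3) by auto
    have "lprod G ?vs \<in> sgen G m B"
      using lprod_in_sgen[OF c(3)] subset_sgen[OF c(3)] vs(1) sB' by blast
    then obtain vs' where vs': "distinct vs'" "set vs' \<subseteq> B" "sign_eq (lprod G ?vs) (lprod G vs')"
      using sgen_elim by blast
    have cc: "set ws \<subseteq> carrier G" "set ?us \<subseteq> carrier G" "set ?vs \<subseteq> carrier G" "set vs' \<subseteq> carrier G"
      using ws(3) vs vs'(2) c by auto
    have "sign_eq (lprod G ws) (lprod G ?us \<otimes> lprod G ?vs)"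
      using lprod_partition[OF cc(1)] by simp
    moreover have "sign_eq (lprod G ?us \<otimes> lprod G ?vs) (lprod G (?us @ vs'))"
      using sign_eq_mult[OF _ _ sign_eq_refl vs'(3)] cc by (simp add: lprod_append)
    moreover have "lprod G ?us \<otimes> lprod G ?vs \<in> carrier G" "lprod G (?us @ vs') \<in> carrier G"
      using cc by simp_all
    ultimately have p: "sign_eq (lprod G ws) (lprod G (?us @ vs'))"
      by (blast intro: sign_eq_trans)
    show ?thesis
    proof (cases "?us @ vs' = []")
      case True
      then have "?vs = ws" "sign_eq (lprod G ?vs) \<one>"
        using vs'(3) by (auto simp: filter_empty_conv)
      moreover have "lprod G ?vs \<noteq> \<one> \<and> lprod G ?vs \<noteq> m"
        using bB' ws vs(1) calculation(1) unfolding basic_def by auto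
      ultimately show ?thesis
        by (auto simp: sign_eq_def)
    next
      case False
      have "distinct (?us @ vs')" "set (?us @ vs') \<subseteq> A \<union> B"
        using ws(1) vs vs' disj by auto
      then have "lprod G (?us @ vs') \<noteq> \<one> \<and> lprod G (?us @ vs') \<noteq> m"
        using AB False unfolding basic_def by blast
      then show ?thesis
        using sign_eq_one_or_minus[OF _ p] cc by simp
    qed
  qed
  then show ?thesis
    using c unfolding basic_def by blast
qed

lemma sgen_Un_cong:
  assumes c: "A \<subseteq> carrier G" "B \<subseteq> carrier G" "B' \<subseteq> carrier G" and sB': "sgen G m B' = sgen G m B"
  shows "sgen G m (A \<union> B') = sgen G m (A \<union> B)"
proof (rule sgen_eqI)
  have "B' \<subseteq> sgen G m (A \<union> B)"
    using subset_sgen[OF c(3)] sB' sgen_mono[of "A \<union> B" B] c by blast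
  then show "A \<union> B' \<subseteq> sgen G m (A \<union> B)"
    using subset_sgen[of "A \<union> B"] c by blast
  have "B \<subseteq> sgen G m (A \<union> B')"
    using subset_sgen[OF c(2)] sB' sgen_mono[of "A \<union> B'" B'] c by blast
  then show "A \<union> B \<subseteq> sgen G m (A \<union> B')"
    using subset_sgen[of "A \<union> B'"] c by blast
qed (use c in blast)+

lemma replacement_Un:
  assumes AB: "basic G m (A \<union> B)" and disj: "A \<inter> B = {}" and B': "replacement G m B B'"
  shows "replacement G m (A \<union> B) (A \<union> B')"
proof -
  have "B' \<subseteq> carrier G" "sgen G m B' = sgen G m B"
    using B' basic_carrier by (auto simp: replacement_def)
  then show ?thesis
    using basic_Un_replacement[OF assms] sgen_Un_cong[of A B B'] basic_carrier[OF AB]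
    by (simp add: replacement_def)
qed

end

definition block_decomposition ::
    "('a, 'b) monoid_scheme \<Rightarrow> 'a \<Rightarrow> nat \<Rightarrow> (nat \<Rightarrow> 'a set) \<Rightarrow> 'a set \<Rightarrow> bool" where
  "block_decomposition G m k F E \<longleftrightarrow>
     E = (\<Union>j\<in>{0..k}. F j) \<and>
     (\<forall>j\<in>{0..k}. \<forall>j'\<in>{0..k}. j \<noteq> j' \<longrightarrow> F j \<inter> F j' = {}) \<and>
     (\<forall>j\<in>{1..k}. anticommutative G m (F j) \<and> card (F j) \<ge> 2) \<and>
     commutative_set G (F 0) \<and>
     (\<forall>j\<in>{0..k}. \<forall>j'\<in>{0..k}. j \<noteq> j' \<longrightarrow> sets_commute G (F j) (F j'))"

lemma block_decomposition_commutative: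
  "commutative_set G E \<Longrightarrow> block_decomposition G m 0 (\<lambda>_. E) E"
  by (simp add: block_decomposition_def)

lemma pairwise_fun_upd_Suc:
  assumes "\<forall>j\<in>{0..k}. \<forall>j'\<in>{0..k}. j \<noteq> j' \<longrightarrow> P (F j) (F j')"
    and "\<forall>j\<in>{0..k}. P A (F j) \<and> P (F j) A"
  shows "\<forall>j\<in>{0..Suc k}. \<forall>j'\<in>{0..Suc k}. j \<noteq> j' \<longrightarrow>
    P ((F(Suc k := A)) j) ((F(Suc k := A)) j')"
proof (intro ballI impI)
  fix j j' assume "j \<in> {0..Suc k}" "j' \<in> {0..Suc k}" "j \<noteq> j'"
  then consider "j \<in> {0..k}" "j' \<in> {0..k}" | "j = Suc k" "j' \<in> {0..k}" | "j \<in> {0..k}" "j' = Suc k"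
    by fastforce
  then show "P ((F(Suc k := A)) j) ((F(Suc k := A)) j')"
    using assms \<open>j \<noteq> j'\<close> by cases auto
qed

lemma block_decomposition_Suc:
  assumes F: "block_decomposition G m k F E"
    and A: "A \<inter> E = {}" "anticommutative G m A" "card A \<ge> 2" "sets_commute G A E"
  shows "block_decomposition G m (Suc k) (F(Suc k := A)) (A \<union> E)"
proof -
  let ?F = "F(Suc k := A)"
  have old: "?F j = F j" "F j \<subseteq> E" if "j \<in> {0..k}" for j
    using that F by (auto simp: block_decomposition_def)
  have "A \<union> E = (\<Union>j\<in>{0..Suc k}. ?F j)"
  proof -
    have "{0..Suc k} = insert (Suc k) {0..k}"
      by auto
    then have "(\<Union>j\<in>{0..Suc k}. ?F j) = A \<union> (\<Union>j\<in>{0..k}. ?F j)"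
      by (simp only: UN_insert fun_upd_same)
    also have "(\<Union>j\<in>{0..k}. ?F j) = E"
      using F old(1) by (simp add: block_decomposition_def)
    finally show ?thesis ..
  qed
  moreover have "\<forall>j\<in>{0..Suc k}. \<forall>j'\<in>{0..Suc k}. j \<noteq> j' \<longrightarrow> ?F j \<inter> ?F j' = {}"
    using F A(1) old(2) by (intro pairwise_fun_upd_Suc) (auto simp: block_decomposition_def)
  moreover have "\<forall>j\<in>{1..Suc k}. anticommutative G m (?F j) \<and> card (?F j) \<ge> 2"
  proof
    fix j assume j: "j \<in> {1..Suc k}"
    show "anticommutative G m (?F j) \<and> card (?F j) \<ge> 2"
    proof (cases "j = Suc k")
      case False
      then have "j \<in> {1..k}" "j \<in> {0..k}"
        using j by auto
      then show ?thesis
        using F old(1) unfolding block_decomposition_def by simp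
    qed (use A(2,3) in simp)
  qed
  moreover have "commutative_set G (?F 0)"
    using F by (simp add: block_decomposition_def)
  moreover have "\<forall>j\<in>{0..Suc k}. \<forall>j'\<in>{0..Suc k}. j \<noteq> j' \<longrightarrow> sets_commute G (?F j) (?F j')"
    using F A(4) old(2) unfolding sets_commute_def
    by (intro pairwise_fun_upd_Suc) (auto simp: block_decomposition_def sets_commute_def)
  ultimately show ?thesis
    unfolding block_decomposition_def by blast
qed

context signed_grp
begin

lemma commutative_set_sgen:
  assumes E: "E \<subseteq> carrier G" and comm: "commutative_set G E"
  shows "commutative_set G (sgen G m E)"
proof -
  have "commutes w a" if "w \<in> sgen G m E" "a \<in> E" for w a
    using sgen_commutes[OF E _ _ that(1), of a] that(2) E comm
    by (auto simp: commutative_set_def commutes_def)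
  then have "commutes w' w" if "w \<in> sgen G m E" "w' \<in> sgen G m E" for w w'
  proof -
    have "\<forall>a\<in>E. commutes a w"
      using that(1) commutes_sym \<open>\<And>w a. w \<in> sgen G m E \<Longrightarrow> a \<in> E \<Longrightarrow> commutes w a\<close> by blast
    moreover have "w \<in> carrier G"
      using that(1) sgen_closed[OF E] by blast
    ultimately show ?thesis
      using sgen_commutes[OF E _ _ that(2)] by blast
  qed
  then show ?thesis
    by (simp add: commutative_set_def commutes_def)
qed

lemma replacement_commutes:
  assumes "replacement G m E E'" "E \<subseteq> carrier G" "a \<in> carrier G" "\<forall>x\<in>E. commutes x a"
  shows "\<forall>x\<in>E'. commutes x a"
proof -
  have "E' \<subseteq> carrier G" "sgen G m E' = sgen G m E"
    using assms(1) basic_carrier by (auto simp: replacement_def)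
  then have "E' \<subseteq> sgen G m E"
    using subset_sgen by blast
  then show ?thesis
    using sgen_commutes[OF assms(2-4)] by blast
qed

lemma replacement_commutative:
  assumes "replacement G m E E'" "E \<subseteq> carrier G" "commutative_set G E'"
  shows "commutative_set G E"
proof -
  have "E' \<subseteq> carrier G" "sgen G m E' = sgen G m E"
    using assms(1) basic_carrier by (auto simp: replacement_def)
  then show ?thesis
    using commutative_set_sgen[of E'] assms(2,3) subset_sgen[of E]
    unfolding commutative_set_def by blast
qed

lemma exists_block_decomposition:
  assumes "basic G m E" "finite E"
  shows "\<exists>k E' F. replacement G m E E' \<and> block_decomposition G m k F E' \<and> 2 * k \<le> card E"
  using assms
proof (induction "card E" arbitrary: E rule: less_induct)
  case less
  have E: "basic G m E" "finite E" "E \<subseteq> carrier G"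
    using less.prems basic_carrier by auto
  show ?case
  proof (cases "commutative_set G E")
    case True
    then show ?thesis
      using replacement_refl[OF E(1)] block_decomposition_commutative by fastforce
  next
    case False
    then obtain a b where ab: "a \<in> E" "b \<in> E" "\<not> commutes a b"
      by (auto simp: commutative_set_def commutes_def)
    then have c: "a \<in> carrier G" "b \<in> carrier G" and anti: "anticommute G m a b"
      using E(3) anticommute_iff_not_commutes by auto
    obtain Y where Y: "replacement G m E ({a, b} \<union> Y)" "{a, b} \<inter> Y = {}" "finite Y"
      "card Y + 2 = card E" "\<forall>y\<in>Y. commutes y a \<and> commutes y b"
      using replacement_split_pair[OF E(1,2) ab(1,2) anti] by blast
    have abY: "basic G m ({a, b} \<union> Y)"
      using Y(1) by (simp add: replacement_def)
    then have bY: "basic G m Y"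
      by (rule basic_subset) blast
    obtain k Y' F where IH: "replacement G m Y Y'" "block_decomposition G m k F Y'" "2 * k \<le> card Y"
      using less.hyps[OF _ bY Y(3)] Y(4) by fastforce
    have Y'_commutes: "commutes y a" "commutes y b" if "y \<in> Y'" for y
      using that replacement_commutes[OF IH(1) basic_carrier[OF bY]] Y(5) c by blast+
    have "a \<notin> Y'" "b \<notin> Y'"
      using Y'_commutes ab(3) commutes_sym by blast+
    then have "{a, b} \<inter> Y' = {}"
      by blast
    moreover have "anticommutative G m {a, b}"
      using anti anticommute_sym[OF c anti] by (auto simp: anticommutative_def)
    moreover have "card {a, b} \<ge> 2"
      using ab(3) by (cases "a = b") (simp_all add: commutes_def)
    moreover have "sets_commute G {a, b} Y'"
      using Y'_commutes by (auto simp: sets_commute_def commutes_def)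
    ultimately have "block_decomposition G m (Suc k) (F(Suc k := {a, b})) ({a, b} \<union> Y')"
      using block_decomposition_Suc[OF IH(2)] by blast
    moreover have "replacement G m E ({a, b} \<union> Y')"
      using replacement_trans[OF Y(1) replacement_Un[OF abY Y(2) IH(1)]] .
    moreover have "2 * Suc k \<le> card E"
      using IH(3) Y(4) by simp
    ultimately show ?thesis
      by blast
  qed
qed

end

theorem theorem5p6:
  fixes G :: "('a, 'b) monoid_scheme" and m :: 'a and E :: "'a set" and n :: nat
  assumes "signed_group G m"
    and "basic G m E" and "finite E" and "card E = n" and "n \<ge> 2"
    and "\<exists>e\<in>E. \<exists>f\<in>E. anticommute G m e f"
  shows "\<exists>k \<in> {1..n}. \<exists>E' (F :: nat \<Rightarrow> 'a set).
           replacement G m E E' \<and>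
           E' = (\<Union>j\<in>{0..k}. F j) \<and>
           (\<forall>j\<in>{0..k}. \<forall>j'\<in>{0..k}. j \<noteq> j' \<longrightarrow> F j \<inter> F j' = {}) \<and>
           (\<forall>j\<in>{1..k}. anticommutative G m (F j) \<and> card (F j) \<ge> 2) \<and>
           commutative_set G (F 0) \<and>
           (\<forall>j\<in>{0..k}. \<forall>j'\<in>{0..k}. j \<noteq> j' \<longrightarrow> sets_commute G (F j) (F j'))"
proof -
  have "group G"
    using assms(1) unfolding signed_group_def by (rule conjunct1)
  then interpret signed_grp G m
    by (rule signed_grp.intro) (simp add: signed_grp_axioms_def assms(1))
  obtain k E' F where dec: "replacement G m E E'" "block_decomposition G m k F E'" "2 * k \<le> n"
    using exists_block_decomposition[OF assms(2,3)] assms(4) by blast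
  have "k \<noteq> 0"
  proof
    assume "k = 0"
    then have "commutative_set G E"
      using dec replacement_commutative basic_carrier[OF assms(2)]
      by (simp add: block_decomposition_def)
    then show False
      using assms(6) anticommute_iff_not_commutes basic_carrier[OF assms(2)]
      unfolding commutative_set_def commutes_def by blast
  qed
  then have "k \<in> {1..n}"
    using dec(3) by simp
  then show ?thesis
    using dec(1,2) unfolding block_decomposition_def by blast
qed

end
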